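(* Fix a constant $\epsilon>0$. There exists a constant $A>0$ (depending only on $\epsilon$) such that for all integers $1 \le k \le d$, the Local Search algorithm with parameter $\epsilon$ (defined in the context), viewed as a map $c$ sending each finite point set $P\subset\mathbb{R}^d$ to its output $c(P)$, is an $(Ak)^{2k}$-composable core-set of size $k$ for the determinant maximization problem with parameter $k$. That is, $|c(P)|\le k$ for every $P$, and for every integer $m\ge1$ and all finite point sets $P_1,\dots,P_m\subset\mathbb{R}^d$, $$\mathrm{MAXDET}_k\Big(\bigcup_{i=1}^m c(P_i)\Big)\ge \frac{1}{(Ak)^{2k}}\,\mathrm{MAXDET}_k\Big(\bigcup_{i=1}^m P_i\Big).$$
   Context: For a finite set $S\subset\mathbb{R}^d$ with $|S|=j$, $\mathrm{VOL}(S)$ denotes the $j$-dimensional volume of the parallelepiped spanned by the vectors of $S$; if $M_S$ is the $j\times d$ matrix whose rows are the points of $S$, then $\det(M_SM_S^\top)=\mathrm{VOL}(S)^2$. For finite $P\subset\mathbb{R}^d$, $\mathrm{MAXDET}_k(P)=\max_{S\subseteq P,\,|S|=k}\det(M_SM_S^\top)$. For a set $\mathcal{C}$ and points $p,q$, $\mathcal{C}+q-p$ denotes $(\mathcal{C}\setminus\{p\})\cup\{q\}$. The Local Search algorithm on input $P$, $k$, $\epsilon$: initialize $\mathcal{C}=\emptyset$; for $i=1,\dots,k$ add to $\mathcal{C}$ a point $\arg\max_{p\in P\setminus\mathcal{C}}\mathrm{VOL}(\mathcal{C}\cup\{p\})$; then repeat: if there are $q\in P\setminus\mathcal{C}$ and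 $p\in\mathcal{C}$ with $\mathrm{VOL}(\mathcal{C}+q-p)\ge(1+\epsilon)\mathrm{VOL}(\mathcal{C})$, replace $p$ by $q$; until no such pair exists; output $\mathcal{C}$. A map $c$ from point sets to subsets of themselves is an $\alpha$-composable core-set for determinant maximization if the displayed inequality (with $\alpha$ in place of $(Ak)^{2k}$) holds for every collection $P_1,\dots,P_m$; it has size $t$ if $|c(P)|\le t$ for all $P$. *)

theory Defs
  imports Complex_Main "HOL-Combinatorics.Permutations"
begin

text \<open>Points of R^d are represented as functions nat => real vanishing at
  all coordinates >= d (so that d can be quantified inside the statement).\<close>

definition Rd :: "nat \<Rightarrow> (nat \<Rightarrow> real) set" where
  "Rd d = {x. \<forall>i\<ge>d. x i = 0}"

definition dotd :: "nat \<Rightarrow> (nat \<Rightarrow> real) \<Rightarrow> (nat \<Rightarrow> real) \<Rightarrow> real" where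
  "dotd d x y = (\<Sum>i<d. x i * y i)"

text \<open>det(M_S M_S^T): Leibniz expansion of the determinant of the Gram
  matrix of S, rows and columns indexed by the elements of S.\<close>
definition gram_det :: "nat \<Rightarrow> (nat \<Rightarrow> real) set \<Rightarrow> real" where
  "gram_det d S = (\<Sum>p\<in>{p. p permutes S}. of_int (sign p) * (\<Prod>s\<in>S. dotd d s (p s)))"

definition VOL :: "nat \<Rightarrow> (nat \<Rightarrow> real) set \<Rightarrow> real" where
  "VOL d S = sqrt (gram_det d S)"

definition MAXDET :: "nat \<Rightarrow> nat \<Rightarrow> (nat \<Rightarrow> real) set \<Rightarrow> real" where
  "MAXDET d k P =
     (if \<exists>S. S \<subseteq> P \<and> card S = k
      then Max {gram_det d S | S. S \<subseteq> P \<and> card S = k} else 0)"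

definition greedy_step :: "nat \<Rightarrow> (nat \<Rightarrow> real) set \<Rightarrow> (nat \<Rightarrow> real) set \<Rightarrow> (nat \<Rightarrow> real) set \<Rightarrow> bool" where
  "greedy_step d P C C' \<longleftrightarrow>
     (\<exists>p\<in>P - C. (\<forall>q\<in>P - C. VOL d (insert q C) \<le> VOL d (insert p C)) \<and> C' = insert p C)"

definition swap_step :: "nat \<Rightarrow> (nat \<Rightarrow> real) set \<Rightarrow> real \<Rightarrow> (nat \<Rightarrow> real) set \<Rightarrow> (nat \<Rightarrow> real) set \<Rightarrow> bool" where
  "swap_step d P eps C C' \<longleftrightarrow>
     (\<exists>q\<in>P - C. \<exists>p\<in>C. C' = insert q (C - {p}) \<and> VOL d C' \<ge> (1 + eps) * VOL d C)"

definition LS_output :: "nat \<Rightarrow> (nat \<Rightarrow> real) set \<Rightarrow> nat \<Rightarrow> real \<Rightarrow> (nat \<Rightarrow> real) set \<Rightarrow> bool" where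
  "LS_output d P k eps C \<longleftrightarrow>
     (\<exists>C0. (greedy_step d P ^^ k) {} C0 \<and> (swap_step d P eps)\<^sup>*\<^sup>* C0 C
           \<and> \<not> (\<exists>C'. swap_step d P eps C C'))"

end

theory Submission
  imports Defs "HOL-Analysis.L2_Norm"
begin

text \<open>
  Write \<open>dist(x, T)\<close> for the distance from \<open>x\<close> to the span of \<open>T\<close>, so that
  \<open>gram_det (insert x T) = gram_det T * dist(x, T)\<^sup>2\<close>. Let \<open>C\<close> be an output of Local Search on
  \<open>P\<close> with \<open>gram_det C > 0\<close> and \<open>s \<in> P - C\<close>. Since no swap of \<open>s\<close> for some \<open>c \<in> C\<close> gains a
  factor \<open>1 + eps\<close>, the coefficient of \<open>c\<close> in the projection of \<open>s\<close> onto the span of \<open>C\<close> is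
  at most \<open>1 + eps\<close> in absolute value and \<open>dist(s, C) \<le> (1 + eps) dist(c, C - {c})\<close>.
  If \<open>card H < card C\<close>, some \<open>c \<in> C\<close> has \<open>dist(c, C - {c}) \<le> card C * dist(c, H)\<close>, and
  splitting \<open>s\<close> into projection and residual then gives some \<open>c \<in> C\<close> with
  \<open>dist(s, H) \<le> 2 (1 + eps) k dist(c, H)\<close>. So a point \<open>s\<close> of a \<open>k\<close>-subset \<open>S\<close> of the union of
  the inputs that lies in no output can be exchanged, with \<open>H = S - {s}\<close>, for an output point
  at the cost of a factor \<open>(2 (1 + eps) k)\<^sup>2\<close> in the Gram determinant, and at most \<open>k\<close>
  exchanges move \<open>S\<close> into the union of the outputs.
\<close>

section \<open>The inner product on the first \<open>d\<close> coordinates\<close>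

lemma dotd_commute: "dotd d x y = dotd d y x"
  unfolding dotd_def by (simp add: mult.commute)

lemma dotd_add_left: "dotd d (\<lambda>n. x n + y n) z = dotd d x z + dotd d y z"
  unfolding dotd_def by (simp add: algebra_simps sum.distrib)

lemma dotd_add_right: "dotd d z (\<lambda>n. x n + y n) = dotd d z x + dotd d z y"
  unfolding dotd_def by (simp add: algebra_simps sum.distrib)

lemma dotd_diff_left: "dotd d (\<lambda>n. x n - y n) z = dotd d x z - dotd d y z"
  unfolding dotd_def by (simp add: algebra_simps sum_subtractf)

lemma dotd_mult_left: "dotd d (\<lambda>n. c * x n) z = c * dotd d x z"
  unfolding dotd_def by (simp add: algebra_simps sum_distrib_left)

lemma dotd_mult_right: "dotd d z (\<lambda>n. c * x n) = c * dotd d z x"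
  unfolding dotd_def by (simp add: algebra_simps sum_distrib_left)

lemma dotd_sum_left: "dotd d (\<lambda>n. \<Sum>t\<in>T. f t n) z = (\<Sum>t\<in>T. dotd d (f t) z)"
  unfolding dotd_def by (simp add: sum_distrib_right sum.swap[of _ T])

lemma dotd_sum_right: "dotd d z (\<lambda>n. \<Sum>t\<in>T. f t n) = (\<Sum>t\<in>T. dotd d z (f t))"
  unfolding dotd_def by (simp add: sum_distrib_left sum.swap[of _ T])

lemma dotd_self_nonneg: "0 \<le> dotd d x x"
  unfolding dotd_def by (intro sum_nonneg) simp

definition normd :: "nat \<Rightarrow> (nat \<Rightarrow> real) \<Rightarrow> real" where
  "normd d x = sqrt (dotd d x x)"

lemma normd_eq_L2_set: "normd d x = L2_set x {..<d}"
  unfolding normd_def L2_set_def dotd_def by (simp add: power2_eq_square)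

lemma normd_nonneg: "0 \<le> normd d x"
  unfolding normd_def by (simp add: dotd_self_nonneg)

lemma normd_power2: "(normd d x)\<^sup>2 = dotd d x x"
  unfolding normd_def by (simp add: dotd_self_nonneg)

lemma dotd_abs_le: "\<bar>dotd d x y\<bar> \<le> normd d x * normd d y"
proof -
  have "\<bar>dotd d x y\<bar> \<le> (\<Sum>i<d. \<bar>x i\<bar> * \<bar>y i\<bar>)"
    unfolding dotd_def by (rule order_trans[OF sum_abs]) (simp add: abs_mult)
  also have "\<dots> \<le> normd d x * normd d y"
    unfolding normd_eq_L2_set by (rule L2_set_mult_ineq)
  finally show ?thesis .
qed

lemma dotd_eq_0_if_self_eq_0: "dotd d x x = 0 \<Longrightarrow> dotd d x y = 0"
  using dotd_abs_le[of d x y] by (simp add: normd_def)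

lemma normd_triangle: "normd d (\<lambda>n. x n + y n) \<le> normd d x + normd d y"
  unfolding normd_eq_L2_set by (rule L2_set_triangle_ineq)

lemma normd_mult: "normd d (\<lambda>n. c * x n) = \<bar>c\<bar> * normd d x"
  unfolding normd_def dotd_mult_left dotd_mult_right
  by (simp add: real_sqrt_mult mult.assoc[symmetric])

lemma normd_sum_le: "normd d (\<lambda>n. \<Sum>t\<in>T. f t n) \<le> (\<Sum>t\<in>T. normd d (f t))"
proof (induction T rule: infinite_finite_induct)
  case (insert t T)
  have "normd d (\<lambda>n. \<Sum>t\<in>insert t T. f t n) = normd d (\<lambda>n. f t n + (\<Sum>t\<in>T. f t n))"
    using insert.hyps by simp
  also have "\<dots> \<le> normd d (f t) + normd d (\<lambda>n. \<Sum>t\<in>T. f t n)"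
    using normd_triangle[of d "f t"] by simp
  finally show ?case
    using insert by simp
qed (simp_all add: normd_def dotd_def)

section \<open>Gram determinants as bilinear forms\<close>

text \<open>Rows and columns are decoupled so that row operations can be performed on one
  side at a time.\<close>
definition gram_form :: "nat \<Rightarrow> 'a set \<Rightarrow> ('a \<Rightarrow> nat \<Rightarrow> real) \<Rightarrow> ('a \<Rightarrow> nat \<Rightarrow> real) \<Rightarrow> real" where
  "gram_form d I u w =
     (\<Sum>p\<in>{p. p permutes I}. of_int (sign p) * (\<Prod>i\<in>I. dotd d (u i) (w (p i))))"

lemma gram_det_eq_gram_form: "gram_det d S = gram_form d S id id"
  unfolding gram_det_def gram_form_def by simp

lemma gram_form_cong:
  assumes "\<And>i. i \<in> I \<Longrightarrow> u i = u' i" "\<And>i. i \<in> I \<Longrightarrow> w i = w' i"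
  shows "gram_form d I u w = gram_form d I u' w'"
  unfolding gram_form_def
proof (intro sum.cong refl)
  fix p assume "p \<in> {p. p permutes I}"
  then have "\<And>i. i \<in> I \<Longrightarrow> p i \<in> I"
    by (simp add: permutes_in_image)
  then show "of_int (sign p) * (\<Prod>i\<in>I. dotd d (u i) (w (p i))) =
      of_int (sign p) * (\<Prod>i\<in>I. dotd d (u' i) (w' (p i)))"
    using assms by (metis (no_types, lifting) prod.cong)
qed

lemma gram_form_transpose:
  assumes "finite I"
  shows "gram_form d I u w = gram_form d I w u"
proof -
  have "gram_form d I u w =
      (\<Sum>p\<in>{p. p permutes I}. of_int (sign (inv p)) * (\<Prod>i\<in>I. dotd d (u i) (w (inv p i))))"
    unfolding gram_form_def by (rule sum_permutations_inverse)
  also have "\<dots> = (\<Sum>p\<in>{p. p permutes I}. of_int (sign p) * (\<Prod>i\<in>I. dotd d (w i) (u (p i))))"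
  proof (intro sum.cong refl)
    fix p assume "p \<in> {p. p permutes I}"
    then have p: "p permutes I" by simp
    have "sign (inv p) = sign p"
      using p assms by (simp add: sign_inverse permutes_imp_permutation)
    moreover have "(\<Prod>i\<in>I. dotd d (u i) (w (inv p i))) = (\<Prod>i\<in>I. dotd d (u (p i)) (w i))"
      using prod.permutes_inv[OF p, of "\<lambda>a b. dotd d (u a) (w b)"] by simp
    ultimately show "of_int (sign (inv p)) * (\<Prod>i\<in>I. dotd d (u i) (w (inv p i))) =
        of_int (sign p) * (\<Prod>i\<in>I. dotd d (w i) (u (p i)))"
      by (simp add: dotd_commute)
  qed
  finally show ?thesis
    unfolding gram_form_def .
qed

lemma gram_form_linear_row:
  assumes "finite I" "j \<in> I"
  shows "gram_form d I (u(j := (\<lambda>n. \<Sum>t\<in>T. c t * v t n))) w =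
    (\<Sum>t\<in>T. c t * gram_form d I (u(j := v t)) w)"
proof -
  define R where "R p = (\<Prod>i\<in>I-{j}. dotd d (u i) (w (p i)))" for p
  have row: "(\<Prod>i\<in>I. dotd d ((u(j := f)) i) (w (p i))) = dotd d f (w (p j)) * R p" for f p
    unfolding R_def using assms by (simp add: prod.remove)
  have "gram_form d I (u(j := (\<lambda>n. \<Sum>t\<in>T. c t * v t n))) w =
      (\<Sum>p\<in>{p. p permutes I}. of_int (sign p) * ((\<Sum>t\<in>T. c t * dotd d (v t) (w (p j))) * R p))"
    unfolding gram_form_def row by (simp add: dotd_sum_left dotd_mult_left)
  also have "\<dots> = (\<Sum>p\<in>{p. p permutes I}. \<Sum>t\<in>T.
      c t * (of_int (sign p) * (dotd d (v t) (w (p j)) * R p)))"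
    by (simp add: sum_distrib_left sum_distrib_right mult_ac)
  also have "\<dots> = (\<Sum>t\<in>T. c t * gram_form d I (u(j := v t)) w)"
    unfolding gram_form_def row by (subst sum.swap) (simp add: sum_distrib_left)
  finally show ?thesis .
qed

lemma gram_form_eq_0_if_rows_eq:
  assumes "finite I" "j \<in> I" "k \<in> I" "j \<noteq> k" "u j = u k"
  shows "gram_form d I u w = 0"
proof -
  let ?t = "transpose j k"
  have t: "?t permutes I"
    using assms by (simp add: permutes_swap_id)
  have u_t: "\<And>i. u (?t i) = u i"
    using assms(5) by (simp add: transpose_def)
  have "gram_form d I u w =
      (\<Sum>p\<in>{p. p permutes I}. of_int (sign (p \<circ> ?t)) * (\<Prod>i\<in>I. dotd d (u i) (w ((p \<circ> ?t) i))))"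
    unfolding gram_form_def by (rule sum_permutations_compose_right[OF t])
  also have "\<dots> = (\<Sum>p\<in>{p. p permutes I}. - (of_int (sign p) * (\<Prod>i\<in>I. dotd d (u i) (w (p i)))))"
  proof (intro sum.cong refl)
    fix p assume "p \<in> {p. p permutes I}"
    then have p: "p permutes I" by simp
    have "sign (p \<circ> ?t) = - sign p"
      using p t assms by (simp add: sign_compose permutes_imp_permutation sign_swap_id)
    moreover have "(\<Prod>i\<in>I. dotd d (u i) (w ((p \<circ> ?t) i))) =
        (\<Prod>i\<in>I. dotd d (u (?t i)) (w ((p \<circ> ?t) (?t i))))"
      using prod.reindex_bij_betw[OF permutes_imp_bij[OF t],
          of "\<lambda>i. dotd d (u i) (w ((p \<circ> ?t) i))"] by simp
    ultimately show "of_int (sign (p \<circ> ?t)) * (\<Prod>i\<in>I. dotd d (u i) (w ((p \<circ> ?t) i))) =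
        - (of_int (sign p) * (\<Prod>i\<in>I. dotd d (u i) (w (p i))))"
      by (simp add: u_t)
  qed
  also have "\<dots> = - gram_form d I u w"
    unfolding gram_form_def by (simp add: sum_negf)
  finally show ?thesis
    by simp
qed

lemma permutes_Diff_singleton_iff:
  assumes "j \<in> I"
  shows "p permutes (I - {j}) \<longleftrightarrow> p permutes I \<and> p j = j"
proof
  assume "p permutes (I - {j})"
  then show "p permutes I \<and> p j = j"
    by (meson Diff_subset permutes_subset permutes_not_in Diff_iff singletonI)
next
  assume "p permutes I \<and> p j = j"
  then show "p permutes (I - {j})"
    unfolding permutes_def by (metis Diff_iff singletonD)
qed

lemma gram_form_orthogonal_row:
  assumes "finite I" "j \<in> I" "\<And>i. i \<in> I - {j} \<Longrightarrow> dotd d (u j) (w i) = 0"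
  shows "gram_form d I u w = dotd d (u j) (w j) * gram_form d (I - {j}) u w"
proof -
  let ?f = "\<lambda>p. of_int (sign p) * (\<Prod>i\<in>I. dotd d (u i) (w (p i)))"
  have "gram_form d I u w = sum ?f {p. p permutes I \<and> p j = j}"
    unfolding gram_form_def
  proof (rule sum.mono_neutral_right)
    show "\<forall>p\<in>{p. p permutes I} - {p. p permutes I \<and> p j = j}. ?f p = 0"
    proof
      fix p assume "p \<in> {p. p permutes I} - {p. p permutes I \<and> p j = j}"
      then have "p j \<in> I - {j}"
        using assms(2) by (auto simp: permutes_in_image)
      then have "dotd d (u j) (w (p j)) = 0"
        using assms(3) by simp
      then show "?f p = 0"
        using assms(1,2) by (simp add: prod_zero_iff) blast
    qed
  qed (use assms(1) finite_permutations in auto)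
  also have "\<dots> = sum ?f {p. p permutes (I - {j})}"
    using permutes_Diff_singleton_iff[OF assms(2)] by simp
  also have "\<dots> = (\<Sum>p\<in>{p. p permutes (I - {j})}.
      dotd d (u j) (w j) * (of_int (sign p) * (\<Prod>i\<in>I - {j}. dotd d (u i) (w (p i)))))"
  proof (intro sum.cong refl)
    fix p assume "p \<in> {p. p permutes (I - {j})}"
    then have "p j = j"
      using permutes_Diff_singleton_iff[OF assms(2)] by simp
    then show "?f p = dotd d (u j) (w j) * (of_int (sign p) * (\<Prod>i\<in>I - {j}. dotd d (u i) (w (p i))))"
      using assms(1,2) by (simp add: prod.remove)
  qed
  also have "\<dots> = dotd d (u j) (w j) * gram_form d (I - {j}) u w"
    unfolding gram_form_def by (simp add: sum_distrib_left)
  finally show ?thesis .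
qed

section \<open>Orthogonal projection onto a span\<close>

definition lincomb :: "(nat \<Rightarrow> real) set \<Rightarrow> ((nat \<Rightarrow> real) \<Rightarrow> real) \<Rightarrow> nat \<Rightarrow> real" where
  "lincomb T a = (\<lambda>n. \<Sum>t\<in>T. a t * t n)"

definition residual ::
    "(nat \<Rightarrow> real) set \<Rightarrow> (nat \<Rightarrow> real) \<Rightarrow> ((nat \<Rightarrow> real) \<Rightarrow> real) \<Rightarrow> nat \<Rightarrow> real" where
  "residual T x a = (\<lambda>n. x n - lincomb T a n)"

definition projection_coeffs ::
    "nat \<Rightarrow> (nat \<Rightarrow> real) set \<Rightarrow> (nat \<Rightarrow> real) \<Rightarrow> ((nat \<Rightarrow> real) \<Rightarrow> real) \<Rightarrow> bool" where
  "projection_coeffs d T x a \<longleftrightarrow> (\<forall>t\<in>T. dotd d (residual T x a) t = 0)"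

lemma lincomb_insert:
  assumes "finite T" "t \<notin> T"
  shows "lincomb (insert t T) a n = a t * t n + lincomb T a n"
  unfolding lincomb_def using assms by simp

lemma dotd_lincomb_left: "dotd d (lincomb T a) z = (\<Sum>t\<in>T. a t * dotd d t z)"
  unfolding lincomb_def by (simp add: dotd_sum_left dotd_mult_left)

lemma dotd_lincomb_right: "dotd d z (lincomb T a) = (\<Sum>t\<in>T. a t * dotd d z t)"
  unfolding lincomb_def by (simp add: dotd_sum_right dotd_mult_right)

lemma residual_add_lincomb: "(\<lambda>n. residual T x a n + lincomb T a n) = x"
  unfolding residual_def by simp

lemma dotd_residual_lincomb:
  "projection_coeffs d T x a \<Longrightarrow> dotd d (residual T x a) (lincomb T b) = 0"
  unfolding projection_coeffs_def by (simp add: dotd_lincomb_right)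

lemma gram_form_subtract_lincomb:
  assumes "finite T" "x \<notin> T"
  shows "gram_form d (insert x T) (id(x := residual T x a)) w = gram_form d (insert x T) id w"
proof -
  let ?I = "insert x T"
  let ?c = "\<lambda>t. if t = x then 1 else - a t"
  have "residual T x a = (\<lambda>n. \<Sum>t\<in>?I. ?c t * id t n)"
  proof
    fix n
    have "(\<Sum>t\<in>T. ?c t * t n) = (\<Sum>t\<in>T. - (a t * t n))"
      using assms(2) by (intro sum.cong) auto
    then show "residual T x a n = (\<Sum>t\<in>?I. ?c t * id t n)"
      using assms by (simp add: residual_def lincomb_def sum_negf)
  qed
  then have "gram_form d ?I (id(x := residual T x a)) w = (\<Sum>t\<in>?I. ?c t * gram_form d ?I (id(x := id t)) w)"
    using assms by (simp only:) (intro gram_form_linear_row, auto)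
  also have "\<dots> = gram_form d ?I id w + (\<Sum>t\<in>T. ?c t * gram_form d ?I (id(x := id t)) w)"
    using assms by (simp add: fun_upd_idem)
  also have "(\<Sum>t\<in>T. ?c t * gram_form d ?I (id(x := id t)) w) = 0"
  proof (intro sum.neutral ballI)
    fix t assume "t \<in> T"
    then have "gram_form d ?I (id(x := id t)) w = 0"
      using assms by (intro gram_form_eq_0_if_rows_eq[of ?I x t]) auto
    then show "?c t * gram_form d ?I (id(x := id t)) w = 0"
      by simp
  qed
  finally show ?thesis
    by (simp only: add_0_right)
qed

lemma gram_det_insert_residual:
  assumes "finite T" "x \<notin> T" "projection_coeffs d T x a"
  shows "gram_det d (insert x T) = gram_det d T * dotd d (residual T x a) (residual T x a)"
proof -
  let ?I = "insert x T"
  let ?r = "residual T x a"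
  let ?u = "id(x := ?r)"
  have "gram_form d ?I id id = gram_form d ?I ?u id"
    using gram_form_subtract_lincomb[OF assms(1,2)] by simp
  also have "\<dots> = gram_form d ?I id ?u"
    using assms(1) by (simp add: gram_form_transpose)
  also have "\<dots> = gram_form d ?I ?u ?u"
    using gram_form_subtract_lincomb[OF assms(1,2)] by simp
  also have "\<dots> = dotd d (?u x) (?u x) * gram_form d (?I - {x}) ?u ?u"
  proof (rule gram_form_orthogonal_row)
    fix i assume "i \<in> ?I - {x}"
    then show "dotd d (?u x) (?u i) = 0"
      using assms(3) unfolding projection_coeffs_def by auto
  qed (use assms(1) in auto)
  also have "?I - {x} = T"
    using assms(2) by auto
  also have "gram_form d T ?u ?u = gram_form d T id id"
    using assms(2) by (intro gram_form_cong) auto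
  finally have "gram_form d ?I id id = dotd d (?u x) (?u x) * gram_form d T id id" .
  then show ?thesis
    by (simp add: gram_det_eq_gram_form mult.commute)
qed

lemma residual_insert:
  assumes "finite T" "t \<notin> T"
  shows "residual (insert t T) x (\<lambda>s. if s = t then mu else a s - mu * b s) =
    (\<lambda>n. residual T x a n - mu * residual T t b n)"
proof
  fix n
  let ?c = "\<lambda>s. if s = t then mu else a s - mu * b s"
  have "lincomb T ?c n = (\<Sum>s\<in>T. a s * s n - mu * (b s * s n))"
    unfolding lincomb_def using assms(2) by (intro sum.cong) (auto simp: algebra_simps)
  then have lin: "lincomb T ?c n = lincomb T a n - mu * lincomb T b n"
    by (simp add: lincomb_def sum_subtractf sum_distrib_left)
  have "residual (insert t T) x ?c n = x n - (mu * t n + lincomb T ?c n)"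
    unfolding residual_def using lincomb_insert[OF assms] by simp
  then show "residual (insert t T) x ?c n = residual T x a n - mu * residual T t b n"
    unfolding lin by (simp add: residual_def algebra_simps)
qed

text \<open>Gram--Schmidt step. If \<open>dotd d u u = 0\<close> then \<open>mu = 0\<close> (as \<open>x / 0 = 0\<close>) and
  \<open>dotd d rx u = 0\<close>, so no case distinction is needed.\<close>
lemma projection_coeffs_exists:
  assumes "finite T"
  shows "\<exists>a. projection_coeffs d T x a"
  using assms
proof (induction T arbitrary: x rule: finite_induct)
  case empty
  then show ?case
    by (simp add: projection_coeffs_def)
next
  case (insert t T)
  obtain ax bt where ax: "projection_coeffs d T x ax" and bt: "projection_coeffs d T t bt"
    using insert.IH by blast
  define rx where "rx = residual T x ax"
  define u where "u = residual T t bt"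
  define mu where "mu = dotd d rx u / dotd d u u"
  define r where "r = (\<lambda>n. rx n - mu * u n)"
  have r_T: "dotd d r s = 0" if "s \<in> T" for s
    using that ax bt unfolding r_def rx_def u_def projection_coeffs_def
    by (simp add: dotd_diff_left dotd_mult_left)
  have "dotd d rx u = mu * dotd d u u"
    using dotd_eq_0_if_self_eq_0[of d u rx] by (simp add: mu_def dotd_commute)
  then have "dotd d r u = 0"
    by (simp add: r_def dotd_diff_left dotd_mult_left)
  moreover have "dotd d r (lincomb T bt) = 0"
    using r_T by (simp add: dotd_lincomb_right)
  moreover have "dotd d r t = dotd d r u + dotd d r (lincomb T bt)"
    using dotd_add_right[of d r u "lincomb T bt"] by (simp add: u_def residual_add_lincomb)
  ultimately have "dotd d r t = 0"
    by simp
  then have "projection_coeffs d (insert t T) x (\<lambda>s. if s = t then mu else ax s - mu * bt s)"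
    using r_T residual_insert[OF insert.hyps] unfolding projection_coeffs_def
    by (simp add: r_def rx_def u_def)
  then show ?case
    by blast
qed

lemma residual_normd_le:
  assumes "projection_coeffs d T x a"
  shows "normd d (residual T x a) \<le> normd d (residual T x b)"
proof -
  let ?r = "residual T x a"
  let ?z = "lincomb T (\<lambda>t. a t - b t)"
  have "residual T x b = (\<lambda>n. ?r n + ?z n)"
    unfolding residual_def lincomb_def by (simp add: sum_subtractf algebra_simps)
  moreover have "dotd d ?r ?z = 0"
    using assms by (rule dotd_residual_lincomb)
  ultimately have "dotd d (residual T x b) (residual T x b) = dotd d ?r ?r + dotd d ?z ?z"
    by (simp add: dotd_add_left dotd_add_right dotd_commute)
  then show ?thesis
    unfolding normd_def using dotd_self_nonneg[of d ?z] by simp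
qed

text \<open>Well defined for finite \<open>T\<close> only (see \<open>dist_span_eq\<close>).\<close>
definition dist_span :: "nat \<Rightarrow> (nat \<Rightarrow> real) set \<Rightarrow> (nat \<Rightarrow> real) \<Rightarrow> real" where
  "dist_span d T x = normd d (residual T x (SOME a. projection_coeffs d T x a))"

lemma dist_span_eq:
  assumes "finite T" "projection_coeffs d T x a"
  shows "dist_span d T x = normd d (residual T x a)"
proof -
  have "projection_coeffs d T x (SOME a. projection_coeffs d T x a)"
    using projection_coeffs_exists[OF assms(1)] by (rule someI_ex)
  then show ?thesis
    unfolding dist_span_def using residual_normd_le assms(2) by (meson order_antisym)
qed

lemma dist_span_le:
  assumes "finite T"
  shows "dist_span d T x \<le> normd d (residual T x b)"
  using projection_coeffs_exists[OF assms] dist_span_eq[OF assms] residual_normd_le by metis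

lemma dist_span_nonneg: "0 \<le> dist_span d T x"
  unfolding dist_span_def by (rule normd_nonneg)

lemma dist_span_eq_0_if_mem:
  assumes "finite T" "x \<in> T"
  shows "dist_span d T x = 0"
proof -
  have "(\<Sum>t\<in>T. (if t = x then 1 else 0) * t n) = (\<Sum>t\<in>T. if t = x then t n else 0)" for n
    by (intro sum.cong) auto
  then have "residual T x (\<lambda>t. if t = x then 1 else 0) = (\<lambda>n. 0)"
    unfolding residual_def lincomb_def using assms by simp
  then have "dist_span d T x \<le> normd d (\<lambda>n. 0)"
    using dist_span_le[OF assms(1), of d x "\<lambda>t. if t = x then 1 else 0"] by simp
  then show ?thesis
    using dist_span_nonneg[of d T x] by (simp add: normd_def dotd_def)
qed

lemma gram_det_insert:
  assumes "finite T" "x \<notin> T"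
  shows "gram_det d (insert x T) = gram_det d T * (dist_span d T x)\<^sup>2"
proof -
  obtain a where a: "projection_coeffs d T x a"
    using projection_coeffs_exists[OF assms(1)] ..
  show ?thesis
    using gram_det_insert_residual[OF assms a] dist_span_eq[OF assms(1) a]
    by (simp add: normd_power2)
qed

lemma gram_det_nonneg: "finite S \<Longrightarrow> 0 \<le> gram_det d S"
proof (induction S rule: finite_induct)
  case empty
  then show ?case
    by (simp add: gram_det_def)
qed (simp add: gram_det_insert)

section \<open>Comparing distances to spans\<close>

lemma homogeneous_system_nontrivial_solution:
  fixes a :: "'c \<Rightarrow> 'h \<Rightarrow> real"
  assumes "finite H" "finite C" "card H < card C"
  shows "\<exists>g. (\<exists>c\<in>C. g c \<noteq> 0) \<and> (\<forall>h\<in>H. (\<Sum>c\<in>C. g c * a c h) = 0)"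
  using assms
proof (induction H arbitrary: C a rule: finite_induct)
  case empty
  then obtain c where "c \<in> C"
    by fastforce
  then show ?case
    by (intro exI[of _ "\<lambda>_. 1"]) auto
next
  case (insert h H)
  show ?case
  proof (cases "\<forall>c\<in>C. a c h = 0")
    case True
    have "card H < card C"
      using insert.hyps insert.prems by simp
    then obtain g where "\<exists>c\<in>C. g c \<noteq> 0" "\<forall>h\<in>H. (\<Sum>c\<in>C. g c * a c h) = 0"
      using insert.IH[of C a] insert.prems by blast
    then show ?thesis
      using True by (intro exI[of _ g]) auto
  next
    case False
    then obtain c0 where c0: "c0 \<in> C" "a c0 h \<noteq> 0"
      by auto
    let ?C = "C - {c0}"
    \<comment> \<open>eliminate the unknown \<open>c0\<close> by means of the equation indexed by \<open>h\<close>\<close>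
    let ?a = "\<lambda>c h'. a c h' - (a c h / a c0 h) * a c0 h'"
    have "card H < card ?C"
      using c0 insert by simp
    then obtain g where g: "\<exists>c\<in>?C. g c \<noteq> 0" "\<forall>h'\<in>H. (\<Sum>c\<in>?C. g c * ?a c h') = 0"
      using insert.IH[of ?C ?a] insert.prems by blast
    define g' where "g' = g(c0 := - (\<Sum>c\<in>?C. g c * a c h) / a c0 h)"
    have g'_sum: "(\<Sum>c\<in>C. g' c * a c h') = (\<Sum>c\<in>?C. g c * ?a c h')" for h'
    proof -
      have "(\<Sum>c\<in>C. g' c * a c h') = g' c0 * a c0 h' + (\<Sum>c\<in>?C. g c * a c h')"
        using c0 insert.prems(1) by (simp add: sum.remove g'_def)
      also have "\<dots> = (\<Sum>c\<in>?C. g c * a c h') - (\<Sum>c\<in>?C. g c * a c h) * (a c0 h' / a c0 h)"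
        by (simp add: g'_def)
      also have "\<dots> = (\<Sum>c\<in>?C. g c * ?a c h')"
        unfolding sum_distrib_right sum_subtractf[symmetric] by (intro sum.cong refl) (simp add: field_simps)
      finally show ?thesis .
    qed
    have "\<forall>h'\<in>insert h H. (\<Sum>c\<in>C. g' c * a c h') = 0"
      unfolding g'_sum using g(2) c0(2) by simp
    moreover have "\<exists>c\<in>C. g' c \<noteq> 0"
      using g(1) unfolding g'_def by auto
    ultimately show ?thesis
      by blast
  qed
qed

lemma dotd_residual_self:
  assumes "projection_coeffs d T x a"
  shows "dotd d (residual T x a) x = dotd d (residual T x a) (residual T x a)"
proof -
  have "dotd d (residual T x a) x =
      dotd d (residual T x a) (residual T x a) + dotd d (residual T x a) (lincomb T a)"
    using dotd_add_right[of d "residual T x a" "residual T x a" "lincomb T a"]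
    by (simp add: residual_add_lincomb)
  then show ?thesis
    using dotd_residual_lincomb[OF assms] by simp
qed

lemma gram_det_pos_Diff_singleton:
  assumes "finite C" "c \<in> C" "0 < gram_det d C"
  shows "0 < gram_det d (C - {c})" "0 < dist_span d (C - {c}) c"
proof -
  have "gram_det d C = gram_det d (C - {c}) * (dist_span d (C - {c}) c)\<^sup>2"
    using gram_det_insert[of "C - {c}" c d] assms(1,2) by (simp add: insert_absorb)
  then show "0 < gram_det d (C - {c})" "0 < dist_span d (C - {c}) c"
    using assms gram_det_nonneg[of "C - {c}" d] dist_span_nonneg[of d "C - {c}" c]
    by (auto simp: zero_less_mult_iff less_le)
qed

lemma dist_span_Diff_singleton_power2:
  assumes "finite C" "c \<in> C" "projection_coeffs d C s al"
  shows "(dist_span d (C - {c}) s)\<^sup>2 = (al c)\<^sup>2 * (dist_span d (C - {c}) c)\<^sup>2 + (dist_span d C s)\<^sup>2"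
proof -
  obtain be where be: "projection_coeffs d (C - {c}) c be"
    using projection_coeffs_exists assms(1) by blast
  define e where "e = residual (C - {c}) c be"
  define r where "r = residual C s al"
  define ga where "ga t = al t + al c * be t" for t
  have "lincomb C al n = al c * c n + lincomb (C - {c}) al n" for n
    unfolding lincomb_def using assms(1,2) by (simp add: sum.remove)
  moreover have "lincomb (C - {c}) ga n = lincomb (C - {c}) al n + al c * lincomb (C - {c}) be n" for n
    unfolding lincomb_def ga_def by (simp add: algebra_simps sum.distrib sum_distrib_left)
  ultimately have res_s: "residual (C - {c}) s ga = (\<lambda>n. al c * e n + r n)"
    unfolding e_def r_def residual_def by (simp add: algebra_simps)
  have e_orth: "dotd d e t = 0" if "t \<in> C - {c}" for t
    using be that unfolding projection_coeffs_def e_def by simp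
  have r_orth: "dotd d r t = 0" if "t \<in> C" for t
    using assms(3) that unfolding projection_coeffs_def r_def by simp
  have "projection_coeffs d (C - {c}) s ga"
    unfolding projection_coeffs_def res_s using e_orth r_orth
    by (simp add: dotd_add_left dotd_mult_left)
  then have "dist_span d (C - {c}) s = normd d (\<lambda>n. al c * e n + r n)"
    using assms(1) dist_span_eq by (simp add: res_s)
  moreover have "dotd d e r = 0"
  proof -
    have "dotd d r c = dotd d r e + dotd d r (lincomb (C - {c}) be)"
      using dotd_add_right[of d r e "lincomb (C - {c}) be"] by (simp add: e_def residual_add_lincomb)
    moreover have "dotd d r (lincomb (C - {c}) be) = 0"
      using r_orth by (simp add: dotd_lincomb_right)
    ultimately show ?thesis
      using r_orth[OF assms(2)] by (simp add: dotd_commute)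
  qed
  ultimately have "(dist_span d (C - {c}) s)\<^sup>2 = dotd d (\<lambda>n. al c * e n + r n) (\<lambda>n. al c * e n + r n)"
    by (simp add: normd_power2)
  also have "\<dots> = (al c)\<^sup>2 * dotd d e e + dotd d r r"
    using \<open>dotd d e r = 0\<close>
    by (simp add: dotd_add_left dotd_add_right dotd_mult_left dotd_mult_right
        dotd_commute[of d r e] power2_eq_square)
  finally show ?thesis
    using dist_span_eq[OF assms(1,3)] dist_span_eq[OF _ be] assms(1)
    by (simp add: e_def r_def normd_power2)
qed

lemma dist_span_le_sum:
  assumes "finite C" "finite H"
  shows "dist_span d H s \<le> (\<Sum>c\<in>C. \<bar>al c\<bar> * dist_span d H c) + normd d (residual C s al)"
proof -
  obtain b where b: "\<And>c. projection_coeffs d H c (b c)"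
    using projection_coeffs_exists[OF assms(2)] by metis
  define gm where "gm h = (\<Sum>c\<in>C. al c * b c h)" for h
  have res_s: "residual H s gm = (\<lambda>n. (\<Sum>c\<in>C. al c * residual H c (b c) n) + residual C s al n)"
  proof
    fix n
    have "(\<Sum>c\<in>C. al c * lincomb H (b c) n) = lincomb H gm n"
      unfolding lincomb_def gm_def
      by (simp add: sum_distrib_left sum_distrib_right mult.assoc sum.swap[of _ C])
    then show "residual H s gm n = (\<Sum>c\<in>C. al c * residual H c (b c) n) + residual C s al n"
      unfolding residual_def lincomb_def by (simp add: algebra_simps sum_subtractf)
  qed
  then have "dist_span d H s \<le> normd d (residual H s gm)"
    using dist_span_le[OF assms(2)] by blast
  also have "\<dots> \<le> normd d (\<lambda>n. \<Sum>c\<in>C. al c * residual H c (b c) n) + normd d (residual C s al)"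
    unfolding res_s by (rule normd_triangle)
  also have "normd d (\<lambda>n. \<Sum>c\<in>C. al c * residual H c (b c) n) \<le> (\<Sum>c\<in>C. \<bar>al c\<bar> * dist_span d H c)"
    using normd_sum_le[of d "\<lambda>c n. al c * residual H c (b c) n" C]
    by (simp add: normd_mult dist_span_eq[OF assms(2) b])
  finally show ?thesis
    by simp
qed

lemma abs_coeff_mult_dist_span_le:
  assumes "finite C" "c \<in> C"
  shows "\<bar>g c\<bar> * dist_span d (C - {c}) c \<le> normd d (lincomb C g)"
proof -
  obtain be where be: "projection_coeffs d (C - {c}) c be"
    using projection_coeffs_exists assms(1) by blast
  define e where "e = residual (C - {c}) c be"
  have orth: "dotd d t e = 0" if "t \<in> C - {c}" for t
    using be that unfolding projection_coeffs_def e_def by (simp add: dotd_commute)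
  have "dotd d (lincomb C g) e = (\<Sum>t\<in>C. g t * dotd d t e)"
    by (rule dotd_lincomb_left)
  also have "\<dots> = g c * dotd d c e + (\<Sum>t\<in>C - {c}. g t * dotd d t e)"
    using assms by (simp add: sum.remove)
  also have "(\<Sum>t\<in>C - {c}. g t * dotd d t e) = 0"
    by (intro sum.neutral) (simp add: orth)
  also have "dotd d c e = (normd d e)\<^sup>2"
    using dotd_residual_self[OF be] by (simp add: e_def normd_power2 dotd_commute)
  finally have "\<bar>g c\<bar> * (normd d e)\<^sup>2 \<le> normd d (lincomb C g) * normd d e"
    using dotd_abs_le[of d "lincomb C g" e] by (simp add: abs_mult)
  then have "\<bar>g c\<bar> * normd d e \<le> normd d (lincomb C g)"
    using normd_nonneg[of d e] normd_nonneg[of d "lincomb C g"]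
    by (cases "normd d e = 0") (auto simp: power2_eq_square)
  then show ?thesis
    using dist_span_eq[OF _ be] assms(1) by (simp add: e_def)
qed

text \<open>Since \<open>card H < card C\<close>, some nontrivial combination \<open>u\<close> of \<open>C\<close> is orthogonal to \<open>H\<close>,
  i.e.\ a combination of the residuals of the points of \<open>C\<close> modulo \<open>H\<close>. Comparing the
  resulting upper bound on its norm with the lower bound of \<open>abs_coeff_mult_dist_span_le\<close>
  yields the point.\<close>
lemma exists_dist_span_Diff_singleton_le:
  assumes "finite C" "finite H" "card H < card C" "0 < gram_det d C"
  shows "\<exists>c\<in>C. dist_span d (C - {c}) c \<le> card C * dist_span d H c"
proof -
  obtain b where b: "\<And>c. projection_coeffs d H c (b c)"
    using projection_coeffs_exists[OF assms(2)] by metis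
  obtain g where g: "\<exists>c\<in>C. g c \<noteq> 0" "\<forall>h\<in>H. (\<Sum>c\<in>C. g c * b c h) = 0"
    using homogeneous_system_nontrivial_solution[OF assms(2,1,3)] by blast
  let ?u = "lincomb C g"
  have u_eq: "?u = (\<lambda>n. \<Sum>c\<in>C. g c * residual H c (b c) n)"
  proof
    fix n
    have "(\<Sum>c\<in>C. g c * lincomb H (b c) n) = (\<Sum>h\<in>H. (\<Sum>c\<in>C. g c * b c h) * h n)"
      unfolding lincomb_def by (simp add: sum_distrib_left sum_distrib_right mult.assoc sum.swap[of _ C])
    then show "?u n = (\<Sum>c\<in>C. g c * residual H c (b c) n)"
      using g(2) unfolding residual_def by (simp add: lincomb_def right_diff_distrib sum_subtractf)
  qed
  have upper: "normd d ?u \<le> (\<Sum>c\<in>C. \<bar>g c\<bar> * dist_span d H c)"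
    using normd_sum_le[of d "\<lambda>c n. g c * residual H c (b c) n" C]
    by (simp add: u_eq normd_mult dist_span_eq[OF assms(2) b])
  obtain c0 where c0: "c0 \<in> C" "g c0 \<noteq> 0"
    using g(1) by blast
  have "0 < \<bar>g c0\<bar> * dist_span d (C - {c0}) c0"
    using c0 gram_det_pos_Diff_singleton(2)[OF assms(1) c0(1) assms(4)] by simp
  then have u_pos: "0 < normd d ?u"
    using abs_coeff_mult_dist_span_le[OF assms(1) c0(1), of g d] by linarith
  have card_pos: "0 < card C"
    using assms(3) by simp
  have "\<exists>c\<in>C. normd d ?u \<le> card C * (\<bar>g c\<bar> * dist_span d H c)"
  proof (rule ccontr)
    assume "\<not> ?thesis"
    then have "(\<Sum>c\<in>C. \<bar>g c\<bar> * dist_span d H c) < card C * (normd d ?u / card C)"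
      using card_pos by (intro sum_bounded_above_strict) (auto simp: field_simps)
    then show False
      using upper card_pos by simp
  qed
  then obtain c where c: "c \<in> C" "normd d ?u \<le> card C * (\<bar>g c\<bar> * dist_span d H c)"
    by blast
  then have "\<bar>g c\<bar> * dist_span d (C - {c}) c \<le> \<bar>g c\<bar> * (card C * dist_span d H c)"
    using abs_coeff_mult_dist_span_le[OF assms(1) c(1), of g d] by (simp add: mult_ac)
  moreover have "g c \<noteq> 0"
    using c(2) u_pos by auto
  ultimately show ?thesis
    using c(1) by auto
qed

section \<open>Local Search\<close>

lemma greedy_steps_subset_card:
  "(greedy_step d P ^^ n) {} C \<Longrightarrow> C \<subseteq> P \<and> finite C \<and> card C = n"
proof (induction n arbitrary: C)
  case (Suc n)
  then obtain C0 where C0: "(greedy_step d P ^^ n) {} C0" "greedy_step d P C0 C"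
    by (auto elim: relpowp_Suc_E)
  then obtain p where "p \<in> P - C0" "C = insert p C0"
    unfolding greedy_step_def by blast
  then show ?case
    using Suc.IH[OF C0(1)] by auto
qed simp

lemma swap_steps_subset_card:
  assumes "(swap_step d P eps)\<^sup>*\<^sup>* C0 C" "C0 \<subseteq> P" "finite C0"
  shows "C \<subseteq> P \<and> finite C \<and> card C = card C0"
  using assms
proof (induction rule: rtranclp_induct)
  case (step C C')
  then obtain q p where "q \<in> P - C" "p \<in> C" "C' = insert q (C - {p})"
    unfolding swap_step_def by blast
  moreover have IH: "C \<subseteq> P \<and> finite C \<and> card C = card C0"
    using step by blast
  ultimately have "card C' = Suc (card (C - {p}))"
    by simp
  also have "\<dots> = card C"
    using IH \<open>p \<in> C\<close> by (metis card_Suc_Diff1)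
  finally show ?case
    using IH \<open>q \<in> P - C\<close> \<open>C' = insert q (C - {p})\<close> by auto
qed simp

lemma LS_output_subset_card:
  "LS_output d P k eps C \<Longrightarrow> C \<subseteq> P \<and> finite C \<and> card C = k"
proof -
  assume "LS_output d P k eps C"
  then obtain C0 where "(greedy_step d P ^^ k) {} C0" "(swap_step d P eps)\<^sup>*\<^sup>* C0 C"
    unfolding LS_output_def by blast
  then show ?thesis
    using greedy_steps_subset_card swap_steps_subset_card by metis
qed

lemma LS_output_no_improving_swap:
  assumes "LS_output d P k eps C" "q \<in> P - C" "p \<in> C"
  shows "VOL d (insert q (C - {p})) < (1 + eps) * VOL d C"
proof (rule ccontr)
  assume "\<not> ?thesis"
  then have "swap_step d P eps C (insert q (C - {p}))"
    unfolding swap_step_def using assms(2,3) by auto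
  then show False
    using assms(1) unfolding LS_output_def by blast
qed

lemma LS_output_superset_if_gram_det_eq_0:
  assumes "LS_output d P k eps C" "1 \<le> k" "gram_det d C = 0"
  shows "P \<subseteq> C"
proof
  fix q assume "q \<in> P"
  obtain p where "p \<in> C"
    using LS_output_subset_card[OF assms(1)] assms(2) by fastforce
  have "0 \<le> VOL d (insert q (C - {p}))"
    using LS_output_subset_card[OF assms(1)] by (simp add: VOL_def gram_det_nonneg)
  then show "q \<in> C"
    using LS_output_no_improving_swap[OF assms(1) _ \<open>p \<in> C\<close>, of q] \<open>q \<in> P\<close> assms(3)
    by (auto simp: VOL_def)
qed

lemma LS_output_swap_dist_span:
  assumes "LS_output d P k eps C" "0 < eps" "0 < gram_det d C" "s \<in> P - C" "c \<in> C"
  shows "dist_span d (C - {c}) s < (1 + eps) * dist_span d (C - {c}) c"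
proof -
  have C: "finite C"
    using LS_output_subset_card[OF assms(1)] by blast
  let ?G = "gram_det d (C - {c})"
  have G_pos: "0 < ?G"
    using gram_det_pos_Diff_singleton(1)[OF C assms(5,3)] .
  have "gram_det d (insert s (C - {c})) = ?G * (dist_span d (C - {c}) s)\<^sup>2"
    using C assms(4) by (intro gram_det_insert) auto
  moreover have "gram_det d C = ?G * (dist_span d (C - {c}) c)\<^sup>2"
    using gram_det_insert[of "C - {c}" c d] C assms(5) by (simp add: insert_absorb)
  ultimately have "sqrt ?G * dist_span d (C - {c}) s < (1 + eps) * (sqrt ?G * dist_span d (C - {c}) c)"
    using LS_output_no_improving_swap[OF assms(1,4,5)]
    by (simp add: VOL_def real_sqrt_mult dist_span_nonneg)
  then show ?thesis
    using G_pos by (simp add: mult.left_commute)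
qed

lemma LS_output_projection_bounds:
  assumes "LS_output d P k eps C" "0 < eps" "0 < gram_det d C" "s \<in> P - C" "c \<in> C"
    and "projection_coeffs d C s al"
  shows "\<bar>al c\<bar> \<le> 1 + eps" "dist_span d C s \<le> (1 + eps) * dist_span d (C - {c}) c"
proof -
  have C: "finite C"
    using LS_output_subset_card[OF assms(1)] by blast
  let ?e = "dist_span d (C - {c}) c"
  have e_pos: "0 < ?e"
    using gram_det_pos_Diff_singleton(2)[OF C assms(5,3)] .
  have "(dist_span d (C - {c}) s)\<^sup>2 < ((1 + eps) * ?e)\<^sup>2"
    using power_strict_mono[OF LS_output_swap_dist_span[OF assms(1-5)] dist_span_nonneg, of 2]
    by simp
  then have sum_lt: "(al c)\<^sup>2 * ?e\<^sup>2 + (dist_span d C s)\<^sup>2 < (1 + eps)\<^sup>2 * ?e\<^sup>2"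
    by (simp only: dist_span_Diff_singleton_power2[OF C assms(5,6)] power_mult_distrib)
  have "(al c)\<^sup>2 * ?e\<^sup>2 < (1 + eps)\<^sup>2 * ?e\<^sup>2"
    using sum_lt zero_le_power2[of "dist_span d C s"] by linarith
  then have "\<bar>al c\<bar>\<^sup>2 < (1 + eps)\<^sup>2"
    using e_pos by simp
  then show "\<bar>al c\<bar> \<le> 1 + eps"
    using power_less_imp_less_base[of "\<bar>al c\<bar>" 2 "1 + eps"] assms(2) by simp
  have "(dist_span d C s)\<^sup>2 \<le> ((1 + eps) * ?e)\<^sup>2"
    using sum_lt zero_le_power2[of "al c * ?e"] unfolding power_mult_distrib by linarith
  then show "dist_span d C s \<le> (1 + eps) * ?e"
    by (rule power2_le_imp_le) (use assms(2) e_pos in simp)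
qed

lemma one_le_approximation_factor: "0 < eps \<Longrightarrow> 1 \<le> k \<Longrightarrow> 1 \<le> 2 * (1 + eps) * real k"
  using mult_mono[of 1 "2 * (1 + eps)" 1 "real k"] by simp

lemma LS_output_dist_span_le_if_gram_det_pos:
  assumes "LS_output d P k eps C" "0 < eps" "0 < gram_det d C" "s \<in> P - C" "finite H" "card H < k"
  shows "\<exists>c\<in>C. dist_span d H s \<le> 2 * (1 + eps) * k * dist_span d H c"
proof -
  have C: "finite C" "card C = k"
    using LS_output_subset_card[OF assms(1)] by auto
  obtain al where al: "projection_coeffs d C s al"
    using projection_coeffs_exists[OF C(1)] ..
  obtain c1 where c1: "c1 \<in> C" "dist_span d (C - {c1}) c1 \<le> k * dist_span d H c1"
    using exists_dist_span_Diff_singleton_le[OF C(1) assms(5) _ assms(3)] C(2) assms(6) by auto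
  define M where "M = Max (dist_span d H ` C)"
  have le_M: "dist_span d H c \<le> M" if "c \<in> C" for c
    unfolding M_def using C(1) that by simp
  obtain cM where cM: "cM \<in> C" "dist_span d H cM = M"
    using Max_in[of "dist_span d H ` C"] C(1) c1(1) unfolding M_def by fastforce
  have "dist_span d H s \<le> (\<Sum>c\<in>C. \<bar>al c\<bar> * dist_span d H c) + dist_span d C s"
    using dist_span_le_sum[OF C(1) assms(5), of d s al] dist_span_eq[OF C(1) al] by simp
  also have "(\<Sum>c\<in>C. \<bar>al c\<bar> * dist_span d H c) \<le> (\<Sum>c\<in>C. (1 + eps) * M)"
    using LS_output_projection_bounds(1)[OF assms(1-4) _ al] le_M assms(2)
    by (intro sum_mono mult_mono) (auto simp: dist_span_nonneg)
  also have "dist_span d C s \<le> (1 + eps) * (k * M)"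
    using LS_output_projection_bounds(2)[OF assms(1-4) c1(1) al] c1 le_M[OF c1(1)] assms(2)
    by (smt (verit) mult_left_mono of_nat_0_le_iff)
  finally show ?thesis
    using cM C(2) by (auto simp: algebra_simps)
qed

lemma LS_output_dist_span_le:
  assumes "LS_output d P k eps C" "0 < eps" "s \<in> P" "finite H" "card H < k"
  shows "\<exists>c\<in>C. dist_span d H s \<le> 2 * (1 + eps) * k * dist_span d H c"
proof (cases "s \<in> C \<or> gram_det d C = 0")
  case True
  have k: "1 \<le> k"
    using assms(5) by simp
  with True have "s \<in> C"
    using LS_output_superset_if_gram_det_eq_0[OF assms(1)] assms(3) by blast
  moreover have "dist_span d H s \<le> 2 * (1 + eps) * k * dist_span d H s"
    using one_le_approximation_factor[OF assms(2) k] dist_span_nonneg[of d H s]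
    by (simp add: mult_le_cancel_right1)
  ultimately show ?thesis
    by blast
next
  case False
  then have "0 < gram_det d C"
    using gram_det_nonneg LS_output_subset_card[OF assms(1)] by (metis order_le_less)
  then show ?thesis
    using LS_output_dist_span_le_if_gram_det_pos[OF assms(1,2) _ _ assms(4,5)] False assms(3) by blast
qed

lemma LS_output_exchange:
  assumes "LS_output d P k eps C" "0 < eps" "s \<in> P" "finite H" "s \<notin> H" "card H < k"
    and "0 < gram_det d (insert s H)"
  shows "\<exists>c\<in>C. c \<notin> H \<and> gram_det d (insert s H) \<le> (2 * (1 + eps) * k)\<^sup>2 * gram_det d (insert c H)"
proof -
  let ?K = "2 * (1 + eps) * real k"
  obtain c where c: "c \<in> C" "dist_span d H s \<le> ?K * dist_span d H c"
    using LS_output_dist_span_le[OF assms(1-4,6)] by blast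
  have s_pos: "0 < dist_span d H s"
    using assms(7) gram_det_insert[OF assms(4,5), of d] dist_span_nonneg[of d H s]
    by (cases "dist_span d H s = 0") auto
  have "c \<notin> H"
  proof
    assume "c \<in> H"
    then show False
      using c(2) s_pos dist_span_eq_0_if_mem[OF assms(4)] by simp
  qed
  moreover have "gram_det d (insert s H) \<le> ?K\<^sup>2 * gram_det d (insert c H)"
  proof -
    have "(dist_span d H s)\<^sup>2 \<le> (?K * dist_span d H c)\<^sup>2"
      using c(2) s_pos by (intro power_mono) auto
    then have "gram_det d H * (dist_span d H s)\<^sup>2 \<le> gram_det d H * (?K\<^sup>2 * (dist_span d H c)\<^sup>2)"
      using gram_det_nonneg[OF assms(4)] by (intro mult_left_mono) (simp_all add: power_mult_distrib)
    then show ?thesis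
      using gram_det_insert[OF assms(4,5)] gram_det_insert[OF assms(4) \<open>c \<notin> H\<close>] by (simp add: mult_ac)
  qed
  ultimately show ?thesis
    using c(1) by blast
qed

lemma LS_outputs_exchange:
  assumes "0 < eps" "\<forall>i<m. LS_output d (Ps i) k eps (Cs i)"
    and "S \<subseteq> (\<Union>i<m. Ps i)" "finite S" "card S = k" "s \<in> S" "s \<notin> (\<Union>i<m. Cs i)"
    and "0 < gram_det d S"
  shows "\<exists>S'. S' \<subseteq> (\<Union>i<m. Ps i) \<and> finite S' \<and> card S' = k \<and>
    S' - (\<Union>i<m. Cs i) = (S - (\<Union>i<m. Cs i)) - {s} \<and>
    gram_det d S \<le> (2 * (1 + eps) * k)\<^sup>2 * gram_det d S'"
proof -
  obtain i where i: "i < m" "s \<in> Ps i"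
    using assms(3,6) by blast
  have LS: "LS_output d (Ps i) k eps (Cs i)"
    using assms(2) i(1) by blast
  define H where "H = S - {s}"
  have H: "finite H" "s \<notin> H" "insert s H = S"
    using assms(4,6) by (auto simp: H_def)
  have card_S: "card S = Suc (card H)"
    using H card_insert_disjoint by metis
  then obtain c where c: "c \<in> Cs i" "c \<notin> H"
    "gram_det d S \<le> (2 * (1 + eps) * k)\<^sup>2 * gram_det d (insert c H)"
    using LS_output_exchange[OF LS assms(1) i(2) H(1,2)] H(3) assms(5,8) by auto
  have "Cs i \<subseteq> Ps i"
    using LS_output_subset_card[OF LS] by blast
  then have "insert c H \<subseteq> (\<Union>i<m. Ps i)"
    using c(1) i(1) assms(3) unfolding H_def by blast
  moreover have "card (insert c H) = k"
    using H(1) c(2) card_S assms(5) by simp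
  moreover have "insert c H - (\<Union>i<m. Cs i) = (S - (\<Union>i<m. Cs i)) - {s}"
    using c(1) i(1) unfolding H_def by auto
  ultimately show ?thesis
    using H(1) c(3) by blast
qed

lemma exists_subset_LS_outputs_gram_det_ge:
  assumes "0 < eps" "\<forall>i<m. LS_output d (Ps i) k eps (Cs i)"
    and "S \<subseteq> (\<Union>i<m. Ps i)" "finite S" "card S = k"
  shows "\<exists>T \<subseteq> (\<Union>i<m. Cs i). card T = k \<and>
    gram_det d S \<le> (2 * (1 + eps) * k) ^ (2 * card (S - (\<Union>i<m. Cs i))) * gram_det d T"
  using assms(3-5)
proof (induction "card (S - (\<Union>i<m. Cs i))" arbitrary: S)
  case 0
  then have empty: "S - (\<Union>i<m. Cs i) = {}"
    by simp
  then have "S \<subseteq> (\<Union>i<m. Cs i)"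
    by blast
  then show ?case
    using 0 by (intro exI[of _ S]) (simp add: empty)
next
  case (Suc n)
  let ?V = "\<Union>i<m. Cs i"
  let ?K = "2 * (1 + eps) * real k"
  have "S - ?V \<noteq> {}"
  proof
    assume "S - ?V = {}"
    then have "card (S - ?V) = 0"
      by (simp only: card.empty)
    then show False
      using Suc.hyps(2) by simp
  qed
  then obtain s where s: "s \<in> S" "s \<notin> ?V"
    by blast
  then obtain i where i: "i < m" "s \<in> Ps i"
    using Suc.prems(1) by blast
  show ?case
  proof (cases "0 < gram_det d S")
    case False
    have "LS_output d (Ps i) k eps (Cs i)"
      using assms(2) i(1) by blast
    then have Ci: "Cs i \<subseteq> ?V" "finite (Cs i)" "card (Cs i) = k"
      using LS_output_subset_card i(1) by auto
    have "0 \<le> ?K ^ (2 * card (S - ?V)) * gram_det d (Cs i)"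
      using assms(1) gram_det_nonneg[OF Ci(2)] by simp
    then have "gram_det d S \<le> ?K ^ (2 * card (S - ?V)) * gram_det d (Cs i)"
      using False by linarith
    then show ?thesis
      using Ci(1,3) by blast
  next
    case True
    then obtain S' where S': "S' \<subseteq> (\<Union>i<m. Ps i)" "finite S'" "card S' = k"
      "S' - ?V = (S - ?V) - {s}" "gram_det d S \<le> ?K\<^sup>2 * gram_det d S'"
      using LS_outputs_exchange[OF assms(1,2) Suc.prems s] by blast
    have "card (S' - ?V) = card (S - ?V) - 1"
      using S'(4) s Suc.prems(2) by simp
    then have "n = card (S' - ?V)"
      using Suc.hyps(2) by linarith
    then obtain T where T: "T \<subseteq> ?V" "card T = k" "gram_det d S' \<le> ?K ^ (2 * n) * gram_det d T"
      using Suc.hyps(1) S'(1-3) by blast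
    have "?K\<^sup>2 * gram_det d S' \<le> ?K\<^sup>2 * (?K ^ (2 * n) * gram_det d T)"
      using T(3) by (rule mult_left_mono) simp
    then have "gram_det d S \<le> ?K\<^sup>2 * (?K ^ (2 * n) * gram_det d T)"
      using S'(5) by linarith
    also have "\<dots> = ?K ^ (2 * card (S - ?V)) * gram_det d T"
      unfolding Suc.hyps(2)[symmetric] by (simp only: mult_Suc_right power_add mult.assoc)
    finally show ?thesis
      using T(1,2) by blast
  qed
qed

section \<open>Composable core-sets\<close>

lemma finite_gram_dets: "finite X \<Longrightarrow> finite {gram_det d S | S. S \<subseteq> X \<and> card S = k}"
  using finite_image_set[of "\<lambda>S. S \<subseteq> X \<and> card S = k" "gram_det d"] by simp

lemma MAXDET_ge:
  assumes "finite X" "T \<subseteq> X" "card T = k"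
  shows "gram_det d T \<le> MAXDET d k X"
  using assms finite_gram_dets[OF assms(1)] unfolding MAXDET_def by (auto intro: Max_ge)

lemma MAXDET_attained:
  assumes "finite X" "\<exists>S. S \<subseteq> X \<and> card S = k"
  shows "\<exists>S \<subseteq> X. card S = k \<and> MAXDET d k X = gram_det d S"
proof -
  have "Max {gram_det d S | S. S \<subseteq> X \<and> card S = k} \<in> {gram_det d S | S. S \<subseteq> X \<and> card S = k}"
    using assms finite_gram_dets[OF assms(1)] by (intro Max_in) auto
  then show ?thesis
    using assms(2) unfolding MAXDET_def by auto
qed

lemma MAXDET_nonneg:
  assumes "finite X"
  shows "0 \<le> MAXDET d k X"
proof (cases "\<exists>S. S \<subseteq> X \<and> card S = k")
  case True
  then obtain S where "S \<subseteq> X" "card S = k" "MAXDET d k X = gram_det d S"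
    using MAXDET_attained[OF assms] by blast
  then show ?thesis
    using gram_det_nonneg[of S d] finite_subset[OF _ assms] by simp
qed (auto simp: MAXDET_def)

lemma MAXDET_le_MAXDET_LS_outputs:
  fixes m :: nat
  assumes "0 < eps" "1 \<le> k" "\<forall>i<m. finite (Ps i) \<and> LS_output d (Ps i) k eps (Cs i)"
  shows "MAXDET d k (\<Union>i<m. Ps i) \<le> (2 * (1 + eps) * k) ^ (2 * k) * MAXDET d k (\<Union>i<m. Cs i)"
proof -
  let ?U = "\<Union>i<m. Ps i"
  let ?V = "\<Union>i<m. Cs i"
  let ?K = "2 * (1 + eps) * real k"
  have U: "finite ?U"
    using assms(3) by (intro finite_UN_I) auto
  have "Cs i \<subseteq> Ps i" if "i \<in> {..<m}" for i
    using assms(3) that LS_output_subset_card[of d "Ps i" k eps "Cs i"] by simp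
  then have "?V \<subseteq> ?U"
    by (rule UN_mono[OF order_refl])
  then have V: "finite ?V"
    using U by (rule finite_subset)
  have K: "1 \<le> ?K"
    using one_le_approximation_factor[OF assms(1,2)] .
  show ?thesis
  proof (cases "\<exists>S. S \<subseteq> ?U \<and> card S = k")
    case False
    then have "MAXDET d k ?U = 0"
      unfolding MAXDET_def by (simp only: if_False)
    then show ?thesis
      using MAXDET_nonneg[OF V, of d k] K by simp
  next
    case True
    then obtain S where S: "S \<subseteq> ?U" "card S = k" "MAXDET d k ?U = gram_det d S"
      using MAXDET_attained[OF U] by blast
    have "finite S"
      using S(1) U finite_subset by blast
    moreover have "\<forall>i<m. LS_output d (Ps i) k eps (Cs i)"
      using assms(3) by blast
    ultimately obtain T where T: "T \<subseteq> ?V" "card T = k" "gram_det d S \<le> ?K ^ (2 * card (S - ?V)) * gram_det d T"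
      using exists_subset_LS_outputs_gram_det_ge[OF assms(1) _ S(1) _ S(2)] by blast
    have "?K ^ (2 * card (S - ?V)) \<le> ?K ^ (2 * k)"
      using K card_mono[OF \<open>finite S\<close>, of "S - ?V"] S(2) by (intro power_increasing) auto
    then have "gram_det d S \<le> ?K ^ (2 * k) * gram_det d T"
      using T(3) gram_det_nonneg[OF finite_subset[OF T(1) V], of d] by (meson mult_right_mono order_trans)
    also have "\<dots> \<le> ?K ^ (2 * k) * MAXDET d k ?V"
      using MAXDET_ge[OF V T(1,2)] K by (intro mult_left_mono) auto
    finally show ?thesis
      using S(3) by simp
  qed
qed

theorem theorem1p2:
  fixes eps :: real
  assumes "eps > 0"
  shows "\<exists>A>0. \<forall>k d. 1 \<le> k \<and> k \<le> d \<longrightarrow>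
    (\<forall>P C. finite P \<and> P \<subseteq> Rd d \<and> LS_output d P k eps C \<longrightarrow> card C \<le> k) \<and>
    (\<forall>m::nat. m \<ge> 1 \<longrightarrow> (\<forall>Ps Cs.
       (\<forall>i<m. finite (Ps i) \<and> Ps i \<subseteq> Rd d \<and> LS_output d (Ps i) k eps (Cs i)) \<longrightarrow>
       MAXDET d k (\<Union>i<m. Cs i) \<ge> MAXDET d k (\<Union>i<m. Ps i) / (A * real k) ^ (2 * k)))"
proof (intro exI[of _ "2 * (1 + eps)"] conjI allI impI)
  show "0 < 2 * (1 + eps)"
    using assms by simp
next
  fix k d P C
  assume "finite P \<and> P \<subseteq> Rd d \<and> LS_output d P k eps C"
  then show "card C \<le> k"
    using LS_output_subset_card[of d P k eps C] by simp
next
  fix k d m :: nat and Ps Cs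
  assume k: "1 \<le> k \<and> k \<le> d"
    and LS: "\<forall>i<m. finite (Ps i) \<and> Ps i \<subseteq> Rd d \<and> LS_output d (Ps i) k eps (Cs i)"
  have "MAXDET d k (\<Union>i<m. Ps i) \<le> (2 * (1 + eps) * k) ^ (2 * k) * MAXDET d k (\<Union>i<m. Cs i)"
    using k LS by (intro MAXDET_le_MAXDET_LS_outputs[OF assms]) auto
  moreover have "0 < (2 * (1 + eps) * real k) ^ (2 * k)"
    using assms k by simp
  ultimately show "MAXDET d k (\<Union>i<m. Ps i) / (2 * (1 + eps) * real k) ^ (2 * k) \<le> MAXDET d k (\<Union>i<m. Cs i)"
    by (simp add: divide_le_eq mult.commute)
qed

end
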